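(* Let $\gamma>0$ be such that $\sum_{k=1}^{N-1}\frac1{\nu_{k,N}}\leq\gamma$ for every $N\in\mathbb N$. Then for every $N\in\mathbb N$ and every $x\in\mathbb R^N$, $\langle x,K_Nx\rangle\geq\frac1{\gamma}N\sup_k|x_k-\overline x|^2$.
   Context: Fix $\mu>1$. For $N\in\mathbb N$, $K_N:\mathbb R^N\to\mathbb R^N$ is $(K_Nx)_k=\frac{\mu}{4\sin^2(\pi/N)}(2x_k-x_{k+1}-x_{k-1})$ with $x_{N+1}:=x_1$, $x_0:=x_N$; $\langle\cdot,\cdot\rangle$ is the Euclidean scalar product; $\overline x=\frac1N\sum_kx_k$; $\nu_{k,N}=\mu\frac{\sin^2(k\pi/N)}{\sin^2(\pi/N)}$, $k=0,\dots,N-1$, are the eigenvalues of $K_N$. *)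

theory Defs
  imports Complex_Main
begin

text \<open>Vectors in R^N are represented as functions nat => real, indices 0..N-1
  (paper indices 1..N shifted by one); cyclic neighbours via mod N.\<close>

definition KN :: "real \<Rightarrow> nat \<Rightarrow> (nat \<Rightarrow> real) \<Rightarrow> nat \<Rightarrow> real" where
  "KN \<mu> N x k = \<mu> / (4 * (sin (pi / real N))^2)
      * (2 * x k - x ((k + 1) mod N) - x ((k + N - 1) mod N))"

definition inner_N :: "nat \<Rightarrow> (nat \<Rightarrow> real) \<Rightarrow> (nat \<Rightarrow> real) \<Rightarrow> real" where
  "inner_N N x y = (\<Sum>k<N. x k * y k)"

definition mean_N :: "nat \<Rightarrow> (nat \<Rightarrow> real) \<Rightarrow> real" where
  "mean_N N x = (\<Sum>k<N. x k) / real N"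

definition nu :: "real \<Rightarrow> nat \<Rightarrow> nat \<Rightarrow> real" where
  "nu \<mu> k N = \<mu> * (sin (real k * pi / real N))^2 / (sin (pi / real N))^2"

end

theory Submission
  imports Defs "HOL-Analysis.Convex"
begin

(* Let y = x - mean x and w = cis (2 pi / N). Since y has zero sum, its discrete Fourier
   transform Y vanishes at frequency 0, and Fourier inversion gives N |y j| <= sum_{k=1}^{N-1} |Y k|.
   The transform of the cyclic difference y l - y (l - 1) is (1 - w^k) Y k, where
   |1 - w^k|^2 = 4 sin^2 (k pi / N); so Cauchy-Schwarz followed by Parseval yields
   (N y j)^2 <= N * sum_l (y l - y (l - 1))^2 * sum_{k=1}^{N-1} 1 / (4 sin^2 (k pi / N)).
   The first sum is <x, K_N x> divided by c = mu / (4 sin^2 (pi / N)), the second is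
   c * sum_k 1 / nu_{k,N} <= c * gamma. *)

lemma cyclic_pred_succ:
  fixes j N :: nat
  assumes "j < N"
  shows "((j + 1) mod N + N - 1) mod N = j"
proof (cases "j + 1 = N")
  case False
  with assms have "(j + 1) mod N + N - 1 = j + N"
    by simp
  with assms show ?thesis
    by simp
qed (use assms in simp)

lemma sum_cyclic_succ:
  fixes N :: nat
  shows "(\<Sum>j<N. h ((j + 1) mod N)) = (\<Sum>j<N. h j)"
proof (cases N)
  case (Suc m)
  have "(\<Sum>j<Suc m. h ((j + 1) mod Suc m)) = h 0 + (\<Sum>j<m. h (Suc j))"
    by (simp add: sum.lessThan_Suc add.commute)
  also have "\<dots> = (\<Sum>j<Suc m. h j)"
    by (rule sum.lessThan_Suc_shift[symmetric])
  finally show ?thesis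
    using Suc by simp
qed simp

lemma sum_cyclic_pred:
  fixes N :: nat
  shows "(\<Sum>j<N. h ((j + N - 1) mod N)) = (\<Sum>j<N. h j)"
proof -
  have "(\<Sum>j<N. h j) = (\<Sum>j<N. h (((j + 1) mod N + N - 1) mod N))"
    by (rule sum.cong[OF refl]) (simp only: lessThan_iff cyclic_pred_succ)
  also have "\<dots> = (\<Sum>j<N. h ((j + N - 1) mod N))"
    by (rule sum_cyclic_succ)
  finally show ?thesis ..
qed

definition unit_root :: "nat \<Rightarrow> complex" where
  "unit_root N = cis (2 * pi / real N)"

lemma unit_root_power: "unit_root N ^ n = cis (2 * pi * real n / real N)"
  unfolding unit_root_def DeMoivre by (simp add: field_simps)

lemma norm_unit_root [simp]: "norm (unit_root N) = 1"
  by (simp add: unit_root_def)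

lemma unit_root_power_self [simp]: "unit_root N ^ N = 1"
  by (cases "N = 0") (simp_all add: unit_root_power)

lemma unit_root_power_mod: "unit_root N ^ (n mod N) = unit_root N ^ n"
proof -
  have "unit_root N ^ n = (unit_root N ^ N) ^ (n div N) * unit_root N ^ (n mod N)"
    by (simp only: power_mult [symmetric] power_add [symmetric] mult_div_mod_eq)
  then show ?thesis
    by simp
qed

lemma unit_root_power_times_cnj: "unit_root N ^ n * cnj (unit_root N) ^ n = 1"
  using complex_norm_square[of "unit_root N ^ n"] by (simp add: norm_power)

lemma sum_unit_root_orthogonal:
  assumes "l < N" "j < N"
  shows "(\<Sum>k<N. unit_root N ^ (l * k) * cnj (unit_root N) ^ (j * k)) = (if l = j then of_nat N else 0)"
proof -
  define q where "q = unit_root N ^ l * cnj (unit_root N) ^ j"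
  have summand: "unit_root N ^ (l * k) * cnj (unit_root N) ^ (j * k) = q ^ k" for k
    by (simp add: q_def power_mult power_mult_distrib)
  show ?thesis
  proof (cases "l = j")
    case True
    then show ?thesis
      by (simp add: summand q_def unit_root_power_times_cnj)
  next
    case False
    have "cnj (unit_root N) ^ N = 1"
      by (metis complex_cnj_one complex_cnj_power unit_root_power_self)
    then have "q ^ N = 1"
      by (simp add: q_def power_mult_distrib flip: power_mult)
        (simp add: mult.commute[of _ N] power_mult)
    moreover have "q \<noteq> 1"
    proof
      assume "q = 1"
      have "unit_root N ^ l = q * unit_root N ^ j"
        using unit_root_power_times_cnj[of N j]
        by (simp add: q_def mult.assoc mult.commute[of "cnj (unit_root N) ^ j"])
      with \<open>q = 1\<close> have "l = j"
        using inj_onD[OF bij_betw_imp_inj_on[OF Complex.bij_betw_roots_unity]] assms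
        by (simp add: unit_root_power)
      with False show False ..
    qed
    ultimately show ?thesis
      using False by (simp add: summand geometric_sum)
  qed
qed

lemma norm_one_minus_unit_root_power:
  "(norm (1 - unit_root N ^ k))\<^sup>2 = 4 * (sin (real k * pi / real N))\<^sup>2"
proof -
  define t where "t = real k * pi / real N"
  have "unit_root N ^ k = cis (2 * t)"
    by (simp add: unit_root_power t_def ac_simps)
  then have "(norm (1 - unit_root N ^ k))\<^sup>2 = (1 - cos (2 * t))\<^sup>2 + (sin (2 * t))\<^sup>2"
    by (simp add: cmod_power2)
  also have "\<dots> = 2 - 2 * cos (2 * t)"
    by (simp add: power2_diff sin_squared_eq)
  also have "\<dots> = 4 * (sin t)\<^sup>2"
    by (simp add: cos_double_sin)
  finally show ?thesis
    unfolding t_def .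
qed

definition dft :: "nat \<Rightarrow> (nat \<Rightarrow> complex) \<Rightarrow> nat \<Rightarrow> complex" where
  "dft N f k = (\<Sum>l<N. f l * unit_root N ^ (l * k))"

lemma dft_inversion:
  assumes "j < N"
  shows "of_nat N * f j = (\<Sum>k<N. dft N f k * cnj (unit_root N) ^ (j * k))"
proof -
  have "(\<Sum>k<N. dft N f k * cnj (unit_root N) ^ (j * k))
      = (\<Sum>l<N. f l * (\<Sum>k<N. unit_root N ^ (l * k) * cnj (unit_root N) ^ (j * k)))"
    unfolding dft_def sum_distrib_right sum_distrib_left
    by (subst sum.swap) (simp add: mult.assoc)
  also have "\<dots> = of_nat N * f j"
    using assms by (simp add: sum_unit_root_orthogonal if_distrib cong: if_cong)
  finally show ?thesis ..
qed

lemma dft_parseval: "(\<Sum>k<N. (norm (dft N f k))\<^sup>2) = real N * (\<Sum>l<N. (norm (f l))\<^sup>2)"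
proof -
  have "complex_of_real (\<Sum>k<N. (norm (dft N f k))\<^sup>2) = (\<Sum>k<N. dft N f k * cnj (dft N f k))"
    by (simp only: of_real_sum complex_norm_square)
  also have "\<dots> = (\<Sum>k<N. \<Sum>l<N. \<Sum>m<N. f l * cnj (f m) * (unit_root N ^ (l * k) * cnj (unit_root N) ^ (m * k)))"
    unfolding dft_def cnj_sum by (simp add: sum_product algebra_simps)
  also have "\<dots> = (\<Sum>l<N. \<Sum>m<N. f l * cnj (f m)
                    * (\<Sum>k<N. unit_root N ^ (l * k) * cnj (unit_root N) ^ (m * k)))"
    by (subst sum.swap, rule sum.cong[OF refl], subst sum.swap) (simp add: sum_distrib_left)
  also have "\<dots> = (\<Sum>l<N. f l * cnj (f l) * of_nat N)"
    by (simp add: sum_unit_root_orthogonal if_distrib cong: if_cong)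
  also have "\<dots> = of_nat N * (\<Sum>l<N. f l * cnj (f l))"
    by (simp add: sum_distrib_left mult.commute)
  also have "\<dots> = complex_of_real (real N * (\<Sum>l<N. (norm (f l))\<^sup>2))"
    by (simp only: of_real_mult of_real_sum complex_norm_square of_real_of_nat_eq)
  finally show ?thesis
    by (simp only: of_real_eq_iff)
qed

lemma dft_cyclic_difference:
  "dft N (\<lambda>l. f l - f ((l + N - 1) mod N)) k = (1 - unit_root N ^ k) * dft N f k"
proof -
  have "(\<Sum>l<N. f ((l + N - 1) mod N) * unit_root N ^ (l * k))
      = (\<Sum>l<N. f (((l + 1) mod N + N - 1) mod N) * unit_root N ^ (((l + 1) mod N) * k))"
    by (rule sum_cyclic_succ[symmetric])
  also have "\<dots> = (\<Sum>l<N. f l * unit_root N ^ (((l + 1) mod N) * k))"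
    by (rule sum.cong[OF refl]) (simp only: lessThan_iff cyclic_pred_succ)
  also have "\<dots> = unit_root N ^ k * dft N f k"
  proof -
    have "unit_root N ^ (((l + 1) mod N) * k) = unit_root N ^ k * unit_root N ^ (l * k)" for l
      by (simp only: power_mult unit_root_power_mod) (simp add: power_mult_distrib)
    then show ?thesis
      by (simp add: dft_def sum_distrib_left ac_simps)
  qed
  finally show ?thesis
    by (simp add: dft_def sum_subtractf left_diff_distrib)
qed

lemma norm_le_sum_norm_dft:
  assumes "(\<Sum>l<N. f l) = 0" and "j < N"
  shows "real N * norm (f j) \<le> (\<Sum>k\<in>{1..<N}. norm (dft N f k))"
proof -
  have "dft N f 0 = 0"
    using assms(1) by (simp add: dft_def)
  moreover have "{..<N} = insert 0 {1..<N}"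
    using assms(2) by auto
  ultimately have "of_nat N * f j = (\<Sum>k\<in>{1..<N}. dft N f k * cnj (unit_root N) ^ (j * k))"
    using dft_inversion[OF assms(2), of f] by simp
  then have "real N * norm (f j) = norm (\<Sum>k\<in>{1..<N}. dft N f k * cnj (unit_root N) ^ (j * k))"
    by (metis norm_mult norm_of_nat)
  also have "\<dots> \<le> (\<Sum>k\<in>{1..<N}. norm (dft N f k * cnj (unit_root N) ^ (j * k)))"
    by (rule norm_sum)
  also have "\<dots> = (\<Sum>k\<in>{1..<N}. norm (dft N f k))"
    by (simp add: norm_mult norm_power)
  finally show ?thesis .
qed

lemma sin_pi_fraction_pos: "0 < k \<Longrightarrow> k < N \<Longrightarrow> 0 < sin (real k * pi / real N)"
  by (rule sin_gt_zero) (simp_all add: field_simps)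

definition cycle_energy :: "nat \<Rightarrow> (nat \<Rightarrow> real) \<Rightarrow> real" where
  "cycle_energy N x = (\<Sum>j<N. (x j - x ((j + N - 1) mod N))\<^sup>2)"

lemma cycle_energy_nonneg: "cycle_energy N x \<ge> 0"
  by (simp add: cycle_energy_def sum_nonneg)

lemma discrete_sobolev_cycle:
  fixes y :: "nat \<Rightarrow> real"
  assumes "(\<Sum>l<N. y l) = 0" and "j < N"
  shows "(real N * y j)\<^sup>2
           \<le> real N * cycle_energy N y * (\<Sum>k\<in>{1..<N}. 1 / (4 * (sin (real k * pi / real N))\<^sup>2))"
proof -
  define f where "f l = complex_of_real (y l)" for l
  define g where "g = (\<lambda>l. f l - f ((l + N - 1) mod N))"
  define d where "d k = norm (1 - unit_root N ^ k)" for k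
  have d_pos: "d k > 0" if "k \<in> {1..<N}" for k
    using sin_pi_fraction_pos[of k N] that norm_one_minus_unit_root_power[of N k]
    by (auto simp: d_def)
  have "real N * \<bar>y j\<bar> \<le> (\<Sum>k\<in>{1..<N}. norm (dft N f k))"
    using norm_le_sum_norm_dft[where f = f] assms by (simp add: f_def flip: of_real_sum)
  also have "\<dots> = (\<Sum>k\<in>{1..<N}. norm (dft N g k) * (1 / d k))"
    using d_pos unfolding g_def dft_cyclic_difference
    by (intro sum.cong refl) (simp add: norm_mult d_def)
  finally have sum_bound: "real N * \<bar>y j\<bar> \<le> (\<Sum>k\<in>{1..<N}. norm (dft N g k) * (1 / d k))" .
  have "(real N * y j)\<^sup>2 = (real N * \<bar>y j\<bar>)\<^sup>2"
    by (simp add: power_mult_distrib)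
  also have "\<dots> \<le> (\<Sum>k\<in>{1..<N}. norm (dft N g k) * (1 / d k))\<^sup>2"
    using sum_bound by (rule power_mono) simp
  also have "\<dots> \<le> (\<Sum>k\<in>{1..<N}. (norm (dft N g k))\<^sup>2) * (\<Sum>k\<in>{1..<N}. (1 / d k)\<^sup>2)"
    by (rule Cauchy_Schwarz_ineq_sum)
  also have "\<dots> \<le> real N * cycle_energy N y * (\<Sum>k\<in>{1..<N}. 1 / (4 * (sin (real k * pi / real N))\<^sup>2))"
  proof (rule mult_mono)
    have "(\<Sum>k\<in>{1..<N}. (norm (dft N g k))\<^sup>2) \<le> (\<Sum>k<N. (norm (dft N g k))\<^sup>2)"
      by (rule sum_mono2) auto
    also have "\<dots> = real N * cycle_energy N y"
      by (simp add: dft_parseval g_def f_def cycle_energy_def flip: of_real_diff)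
    finally show "(\<Sum>k\<in>{1..<N}. (norm (dft N g k))\<^sup>2) \<le> real N * cycle_energy N y" .
    show "(\<Sum>k\<in>{1..<N}. (1 / d k)\<^sup>2) \<le> (\<Sum>k\<in>{1..<N}. 1 / (4 * (sin (real k * pi / real N))\<^sup>2))"
      by (simp add: d_def norm_one_minus_unit_root_power power_one_over)
  qed (simp_all add: cycle_energy_nonneg sum_nonneg)
  finally show ?thesis .
qed

lemma inner_N_KN:
  "inner_N N x (KN \<mu> N x) = \<mu> / (4 * (sin (pi / real N))\<^sup>2) * cycle_energy N x"
proof -
  define c where "c = \<mu> / (4 * (sin (pi / real N))\<^sup>2)"
  define P where "P = (\<Sum>j<N. x ((j + N - 1) mod N) * x j)"
  have succ: "(\<Sum>j<N. x j * x ((j + 1) mod N)) = P"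
  proof -
    have "(\<Sum>j<N. x j * x ((j + 1) mod N))
        = (\<Sum>j<N. x (((j + 1) mod N + N - 1) mod N) * x ((j + 1) mod N))"
      by (rule sum.cong[OF refl]) (simp only: lessThan_iff cyclic_pred_succ)
    then show ?thesis
      unfolding P_def by (simp only: sum_cyclic_succ[where h = "\<lambda>j. x ((j + N - 1) mod N) * x j"])
  qed
  have pred: "(\<Sum>j<N. (x ((j + N - 1) mod N))\<^sup>2) = (\<Sum>j<N. (x j)\<^sup>2)"
    by (rule sum_cyclic_pred)
  have "inner_N N x (KN \<mu> N x) = c * (2 * (\<Sum>j<N. (x j)\<^sup>2) - (\<Sum>j<N. x j * x ((j + 1) mod N)) - P)"
    unfolding inner_N_def KN_def P_def c_def[symmetric]
    by (simp add: sum_distrib_left sum_subtractf algebra_simps power2_eq_square sum.distrib)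
  also have "\<dots> = c * cycle_energy N x"
    unfolding succ cycle_energy_def power2_diff sum.distrib sum_subtractf pred
    by (simp add: P_def sum_distrib_left algebra_simps)
  finally show ?thesis
    unfolding c_def .
qed

lemma sum_inverse_nu:
  assumes "\<mu> \<noteq> 0"
  shows "\<mu> / (4 * (sin (pi / real N))\<^sup>2) * (\<Sum>k=1..N-1. 1 / nu \<mu> k N)
           = (\<Sum>k\<in>{1..<N}. 1 / (4 * (sin (real k * pi / real N))\<^sup>2))"
proof -
  have "\<mu> / (4 * (sin (pi / real N))\<^sup>2) * (1 / nu \<mu> k N) = 1 / (4 * (sin (real k * pi / real N))\<^sup>2)"
    if "k \<in> {1..<N}" for k
    using that assms sin_pi_fraction_pos[of 1 N] sin_pi_fraction_pos[of k N]
    by (simp add: nu_def field_simps)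
  moreover have "{1..N-1} = {1..<N}"
    by auto
  ultimately show ?thesis
    by (simp add: sum_distrib_left)
qed

theorem lemma5p2:
  fixes \<mu> \<gamma> :: real
  assumes "\<mu> > 1"
    and "\<gamma> > 0"
    and "\<forall>N::nat. N \<ge> 1 \<longrightarrow> (\<Sum>k=1..N-1. 1 / nu \<mu> k N) \<le> \<gamma>"
  shows "\<forall>(N::nat) (x::nat \<Rightarrow> real). N \<ge> 1 \<longrightarrow>
           inner_N N x (KN \<mu> N x)
             \<ge> (1 / \<gamma>) * real N * (Max ((\<lambda>k. \<bar>x k - mean_N N x\<bar>) ` {..<N}))^2"
proof (intro allI impI)
  fix N :: nat and x :: "nat \<Rightarrow> real"
  assume "N \<ge> 1"
  define c where "c = \<mu> / (4 * (sin (pi / real N))\<^sup>2)"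
  define y where "y l = x l - mean_N N x" for l
  have "Max ((\<lambda>k. \<bar>x k - mean_N N x\<bar>) ` {..<N}) \<in> (\<lambda>k. \<bar>x k - mean_N N x\<bar>) ` {..<N}"
    using \<open>N \<ge> 1\<close> by (intro Max_in) (auto simp: lessThan_empty_iff)
  then obtain j where "j < N" and max_eq: "Max ((\<lambda>k. \<bar>x k - mean_N N x\<bar>) ` {..<N}) = \<bar>y j\<bar>"
    by (auto simp: y_def)
  have energy: "cycle_energy N y = cycle_energy N x"
    by (simp add: cycle_energy_def y_def)
  have "(\<Sum>l<N. y l) = 0"
    using \<open>N \<ge> 1\<close> by (simp add: y_def mean_N_def sum_subtractf)
  then have "(real N * y j)\<^sup>2 \<le> real N * cycle_energy N y * (c * (\<Sum>k=1..N-1. 1 / nu \<mu> k N))"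
    using discrete_sobolev_cycle[OF _ \<open>j < N\<close>] sum_inverse_nu assms(1) by (simp add: c_def)
  also have "\<dots> \<le> real N * cycle_energy N x * (c * \<gamma>)"
    unfolding energy using assms(1,3) \<open>N \<ge> 1\<close>
    by (intro mult_left_mono) (simp_all add: c_def cycle_energy_nonneg)
  also have "\<dots> = real N * (\<gamma> * inner_N N x (KN \<mu> N x))"
    by (simp add: inner_N_KN c_def)
  finally have "real N * (real N * (y j)\<^sup>2) \<le> real N * (\<gamma> * inner_N N x (KN \<mu> N x))"
    by (simp add: power2_eq_square ac_simps)
  then show "inner_N N x (KN \<mu> N x) \<ge> (1 / \<gamma>) * real N * (Max ((\<lambda>k. \<bar>x k - mean_N N x\<bar>) ` {..<N}))\<^sup>2"
    using \<open>N \<ge> 1\<close> assms(2) by (simp add: max_eq field_simps)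
qed

end
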